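(* Let $K\subset\mathbb{R}$ be a regular compact set, let $g$ be the Green function of $\overline{\mathbb{C}}\setminus K$ with pole at infinity, and for $\delta>0$ put $G(\delta):=\max\{ g(z): z\in\mathbb{C},\ \operatorname{dist}(z,K)\le 2\delta\}$. Let $0<\tau\le 1$ and let $x_0,\ldots,x_{n-1}\in K$ be a $\tau$-quasi Leja sequence. Then for every $\delta>0$, $$|x_i-x_j|\ge \tau\delta e^{-nG(\delta)}\quad\text{for all } i,j\in\{0,\ldots,n-1\},\ i\ne j.$$
   Context: A compact set $K\subset\mathbb{C}$ is regular if the Green function $g(z)=g_{\overline{\mathbb{C}}\setminus K}(z,\infty)$ of $\overline{\mathbb{C}}\setminus K$ with pole at infinity is continuous on $\mathbb{C}$ (with $g=0$ on $K$). For $0<\tau\le1$, a sequence $x_0,\ldots,x_{n-1}\in K$ is $\tau$-quasi Leja if for every $k=1,\ldots,n-1$, $\prod_{j<k}|x_k-x_j|\ge\tau\max_{x\in K}\prod_{j<k}|x-x_j|$. *)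

theory Defs
  imports "HOL-Complex_Analysis.Complex_Analysis"
begin

definition harmonic_on :: "(complex \<Rightarrow> real) \<Rightarrow> complex set \<Rightarrow> bool" where
  "harmonic_on u S \<longleftrightarrow> open S \<and>
     (\<forall>z\<in>S. \<exists>r>0. \<exists>f. f holomorphic_on ball z r \<and> ball z r \<subseteq> S \<and>
         (\<forall>w\<in>ball z r. u w = Re (f w)))"

text \<open>g is the (continuous) Green function of the complement of K with pole at infinity:
  continuous on C, zero on K, harmonic on C minus K, and g(z) - log|z| bounded near infinity.
  (By the maximum principle such a function is unique; it exists iff K is regular.)\<close>
definition green_function_cont :: "complex set \<Rightarrow> (complex \<Rightarrow> real) \<Rightarrow> bool" where
  "green_function_cont K g \<longleftrightarrow>
     continuous_on UNIV g \<and> (\<forall>z\<in>K. g z = 0) \<and> harmonic_on g (- K) \<and>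
     (\<exists>R C. \<forall>z. R \<le> cmod z \<longrightarrow> \<bar>g z - ln (cmod z)\<bar> \<le> C)"

definition regular_compact :: "complex set \<Rightarrow> bool" where
  "regular_compact K \<longleftrightarrow> compact K \<and> (\<exists>g. green_function_cont K g)"

definition quasi_leja :: "real \<Rightarrow> complex set \<Rightarrow> (nat \<Rightarrow> complex) \<Rightarrow> nat \<Rightarrow> bool" where
  "quasi_leja \<tau> K x n \<longleftrightarrow> (\<forall>i<n. x i \<in> K) \<and>
     (\<forall>k. 1 \<le> k \<and> k < n \<longrightarrow>
        (\<Prod>j<k. cmod (x k - x j)) \<ge> \<tau> * (SUP z\<in>K. \<Prod>j<k. cmod (z - x j)))"

end

theory Submission
  imports Defs
begin

(* For j < n, the polynomial q(z) = prod_{l<j} (z - x_l) satisfies the Bernstein-Walsh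
   inequality |q| <= ||q||_K e^{n g}: off K the function |q| e^{-n g} is locally the modulus of
   a holomorphic function and it vanishes at infinity, so the maximum modulus principle bounds it
   by its values on K. If x_i lies within delta of x_j, divide q by (z - x_i) and apply the
   maximum modulus principle on the circle |z - x_j| = 2 delta, where |z - x_i| >= delta and
   g <= G(delta); together with the quasi-Leja property |q(x_j)| >= tau ||q||_K this gives
   |x_j - x_i| >= tau delta e^{-n G(delta)}. *)

lemma continuous_vanishing_at_infinity_attains_max:
  fixes w :: "'a::{real_normed_vector,heine_borel} \<Rightarrow> real"
  assumes cont: "continuous_on UNIV w" and lim: "(w \<longlongrightarrow> 0) at_infinity" and pos: "0 < w z"
  obtains z0 where "\<And>y. w y \<le> w z0"
proof -
  obtain R where R: "\<And>y. R \<le> norm y \<Longrightarrow> w y < w z"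
    using order_tendstoD(2)[OF lim pos] by (auto simp: eventually_at_infinity)
  define R' where "R' = max R (norm z)"
  have "cball 0 R' \<noteq> {}" unfolding R'_def by simp
  then obtain z0 where z0: "\<And>y. y \<in> cball 0 R' \<Longrightarrow> w y \<le> w z0"
    using continuous_attains_sup[OF compact_cball _ continuous_on_subset[OF cont subset_UNIV]]
    by blast
  have "w y \<le> w z0" for y
  proof (cases "norm y \<le> R'")
    case True
    then show ?thesis using z0 by simp
  next
    case False
    then have "w y < w z" using R unfolding R'_def by auto
    also have "w z \<le> w z0" using z0 unfolding R'_def by simp
    finally show ?thesis by simp
  qed
  then show thesis using that by blast
qed

lemma maximum_principle_local_modulus:
  fixes w :: "complex \<Rightarrow> real"
  assumes cont: "continuous_on UNIV w" and lim: "(w \<longlongrightarrow> 0) at_infinity"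
    and nonneg: "\<And>y. 0 \<le> w y"
    and local_modulus: "\<And>y. y \<notin> K \<Longrightarrow>
      \<exists>r>0. \<exists>h. h holomorphic_on ball y r \<and> (\<forall>u\<in>ball y r. w u = cmod (h u))"
    and "K \<noteq> {}" and le_M: "\<And>z. z \<in> K \<Longrightarrow> w z \<le> M"
  shows "w z \<le> M"
proof (rule ccontr)
  assume "\<not> w z \<le> M"
  obtain k where k: "k \<in> K" using \<open>K \<noteq> {}\<close> by blast
  then have "0 < w z" using nonneg[of k] le_M[of k] \<open>\<not> w z \<le> M\<close> by linarith
  then obtain z0 where max: "\<And>y. w y \<le> w z0"
    using continuous_vanishing_at_infinity_attains_max[OF cont lim] by blast
  have above: "M < w z0" using max[of z] \<open>\<not> w z \<le> M\<close> by linarith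
  define S where "S = {y. w y = w z0}"
  have "open S"
  proof (rule openI)
    fix y assume "y \<in> S"
    then have "y \<notin> K" using le_M above unfolding S_def by force
    then obtain r h where r: "r > 0" and hol: "h holomorphic_on ball y r"
      and h: "\<And>u. u \<in> ball y r \<Longrightarrow> w u = cmod (h u)"
      using local_modulus by blast
    have "cmod (h u) \<le> cmod (h y)" if "u \<in> ball y r" for u
      using h[OF that] h[of y] r max[of u] \<open>y \<in> S\<close> unfolding S_def by simp
    then have "h constant_on ball y r"
      using r by (intro maximum_modulus_principle[OF hol, of "ball y r" y]) auto
    then have "ball y r \<subseteq> S"
      using h \<open>y \<in> S\<close> r unfolding S_def constant_on_def by (metis centre_in_ball mem_Collect_eq subsetI)
    then show "\<exists>e>0. ball y e \<subseteq> S" using r by blast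
  qed
  moreover have "closed S"
    unfolding S_def by (intro closed_Collect_eq cont continuous_on_const)
  moreover have "z0 \<in> S" unfolding S_def by simp
  ultimately have "k \<in> S" using clopen by blast
  then show False using le_M[OF k] above unfolding S_def by simp
qed

lemma poly_exp_neg_green_tendsto_0:
  fixes p :: "complex poly"
  assumes green: "green_function_cont K g" and deg: "degree p < N"
  shows "((\<lambda>z. cmod (poly p z) * exp (- (real N * g z))) \<longlongrightarrow> 0) at_infinity"
proof -
  obtain R C where RC: "\<And>z. R \<le> cmod z \<Longrightarrow> \<bar>g z - ln (cmod z)\<bar> \<le> C"
    using green unfolding green_function_cont_def by blast
  have exp_bound: "exp (- (real N * g z)) \<le> exp (real N * C) / cmod z ^ N"
    if "max R 1 \<le> cmod z" for z
  proof -
    have "ln (cmod z) - C \<le> g z" using RC[of z] that by linarith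
    then have "- (real N * g z) \<le> real N * C - real N * ln (cmod z)"
      using mult_left_mono[of "ln (cmod z) - C" "g z" "real N"] by (simp add: algebra_simps)
    then have "exp (- (real N * g z)) \<le> exp (real N * C - real N * ln (cmod z))"
      by simp
    also have "\<dots> = exp (real N * C) / exp (ln (cmod z)) ^ N"
      by (simp add: exp_diff exp_of_nat_mult)
    also have "\<dots> = exp (real N * C) / cmod z ^ N"
      using that by (subst exp_ln) auto
    finally show ?thesis .
  qed
  have upper: "\<forall>\<^sub>F z in at_infinity. cmod (poly p z) * exp (- (real N * g z))
      \<le> exp (real N * C) * cmod (poly p z / poly (monom 1 N) z)"
  proof (rule eventually_at_infinityI)
    fix z :: complex assume "max R 1 \<le> cmod z"
    then have "cmod (poly p z) * exp (- (real N * g z))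
        \<le> cmod (poly p z) * (exp (real N * C) / cmod z ^ N)"
      by (intro mult_left_mono exp_bound) auto
    also have "\<dots> = exp (real N * C) * cmod (poly p z / poly (monom 1 N) z)"
      by (simp add: poly_monom norm_divide norm_power)
    finally show "cmod (poly p z) * exp (- (real N * g z))
        \<le> exp (real N * C) * cmod (poly p z / poly (monom 1 N) z)" .
  qed
  have "((\<lambda>z. poly p z / poly (monom 1 N) z) \<longlongrightarrow> 0) at_infinity"
    using deg by (intro poly_divide_tendsto_0_at_infinity) (simp add: degree_monom_eq)
  then have lim: "((\<lambda>z. exp (real N * C) * cmod (poly p z / poly (monom 1 N) z)) \<longlongrightarrow> 0) at_infinity"
    by (intro tendsto_mult_right_zero tendsto_norm_zero)
  show ?thesis
    using tendsto_sandwich[OF _ upper tendsto_const lim] by (simp add: always_eventually)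
qed

text \<open>The strict bound \<open>degree p < N\<close> makes \<open>|p| exp (- N g)\<close> vanish at infinity, so the
  maximum principle applies on the plane without treating the point at infinity.\<close>
lemma bernstein_walsh:
  fixes p :: "complex poly"
  assumes green: "green_function_cont K g" and "K \<noteq> {}" and deg: "degree p < N"
    and le_M: "\<And>z. z \<in> K \<Longrightarrow> cmod (poly p z) \<le> M"
  shows "cmod (poly p z) \<le> M * exp (real N * g z)"
proof -
  define w where "w z = cmod (poly p z) * exp (- (real N * g z))" for z
  have g_cont: "continuous_on UNIV g" and g_K: "\<And>z. z \<in> K \<Longrightarrow> g z = 0"
    and harm: "harmonic_on g (- K)"
    using green unfolding green_function_cont_def by auto
  have "\<exists>r>0. \<exists>h. h holomorphic_on ball y r \<and> (\<forall>u\<in>ball y r. w u = cmod (h u))"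
    if "y \<notin> K" for y
  proof -
    obtain r f where "r > 0" and hol: "f holomorphic_on ball y r"
      and g_Re: "\<And>u. u \<in> ball y r \<Longrightarrow> g u = Re (f u)"
      using harm \<open>y \<notin> K\<close> unfolding harmonic_on_def by blast
    define h where "h u = poly p u * exp (- (of_nat N * f u))" for u
    have "h holomorphic_on ball y r"
      unfolding h_def by (intro holomorphic_intros hol)
    moreover have "w u = cmod (h u)" if "u \<in> ball y r" for u
      unfolding h_def w_def using g_Re[OF that] by (simp add: norm_mult)
    ultimately show ?thesis using \<open>r > 0\<close> by blast
  qed
  moreover have "continuous_on UNIV w"
    unfolding w_def by (intro continuous_intros g_cont)
  moreover have "(w \<longlongrightarrow> 0) at_infinity"
    unfolding w_def by (rule poly_exp_neg_green_tendsto_0[OF green deg])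
  moreover have "w z \<le> M" if "z \<in> K" for z
    using le_M[OF that] g_K[OF that] unfolding w_def by simp
  ultimately have "w z \<le> M"
    using maximum_principle_local_modulus[of w K M] \<open>K \<noteq> {}\<close> unfolding w_def by auto
  then show ?thesis
    unfolding w_def by (simp add: exp_minus field_simps)
qed

lemma norm_le_of_sphere_bound_with_linear_factor:
  fixes h :: "complex \<Rightarrow> complex"
  assumes hol: "h holomorphic_on ball c r" and cont: "continuous_on (cball c r) h"
    and "dist a c \<le> s" and "s < r"
    and bound: "\<And>z. dist c z = r \<Longrightarrow> cmod ((z - a) * h z) \<le> B"
  shows "(r - s) * cmod (h c) \<le> B"
proof -
  have "cmod (h z) \<le> B / (r - s)" if "z \<in> frontier (cball c r)" for z
  proof -
    have "dist c z = r" using that \<open>s < r\<close> \<open>dist a c \<le> s\<close> by auto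
    then have "r - s \<le> cmod (z - a)"
      using dist_triangle[of c z a] \<open>dist a c \<le> s\<close> by (simp add: dist_norm norm_minus_commute)
    then have "(r - s) * cmod (h z) \<le> cmod (z - a) * cmod (h z)"
      by (rule mult_right_mono) simp
    also have "\<dots> \<le> B"
      using bound[OF \<open>dist c z = r\<close>] by (simp add: norm_mult)
    finally show ?thesis using \<open>s < r\<close> by (simp add: field_simps)
  qed
  moreover have "c \<in> cball c r" using order_trans[OF zero_le_dist \<open>dist a c \<le> s\<close>] \<open>s < r\<close> by simp
  ultimately have "cmod (h c) \<le> B / (r - s)"
    using maximum_modulus_frontier[of h "cball c r" "B / (r - s)" c] hol cont by simp
  then show ?thesis using \<open>s < r\<close> by (simp add: field_simps)
qed

lemma continuous_le_Sup_infdist_le: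
  fixes g :: "'a::heine_borel \<Rightarrow> real"
  assumes "continuous_on UNIV g" and "compact K" and "K \<noteq> {}" and "0 < \<epsilon>"
    and "infdist z K \<le> \<epsilon>"
  shows "g z \<le> (SUP y\<in>{y. infdist y K \<le> \<epsilon>}. g y)"
proof -
  have "compact (g ` {y. infdist y K \<le> \<epsilon>})"
    using assms by (intro compact_continuous_image compact_infdist_le)
      (auto intro: continuous_on_subset)
  then show ?thesis
    using assms by (intro cSUP_upper bounded_imp_bdd_above compact_imp_bounded) auto
qed

lemma quasi_leja_gap:
  fixes K :: "complex set" and g :: "complex \<Rightarrow> real" and x :: "nat \<Rightarrow> complex"
  assumes "compact K" and green: "green_function_cont K g"
    and "0 < \<tau>" and "\<tau> \<le> 1" and leja: "quasi_leja \<tau> K x n"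
    and "i < j" and "j < n" and "0 < \<delta>"
  shows "\<tau> * \<delta> * exp (- (real n * (SUP z\<in>{z. infdist z K \<le> 2 * \<delta>}. g z)))
    \<le> cmod (x j - x i)"
proof -
  define G where "G = (SUP z\<in>{z. infdist z K \<le> 2 * \<delta>}. g z)"
  have xK: "\<And>l. l < n \<Longrightarrow> x l \<in> K" using leja unfolding quasi_leja_def by auto
  then have "K \<noteq> {}" using \<open>j < n\<close> by blast
  have g_cont: "continuous_on UNIV g" and g_K: "\<And>z. z \<in> K \<Longrightarrow> g z = 0"
    using green unfolding green_function_cont_def by auto
  have g_le_G: "g z \<le> G" if "infdist z K \<le> 2 * \<delta>" for z
    unfolding G_def using continuous_le_Sup_infdist_le[OF g_cont \<open>compact K\<close> \<open>K \<noteq> {}\<close>] that \<open>0 < \<delta>\<close>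
    by simp
  have "0 \<le> G" using g_le_G[of "x j"] g_K[of "x j"] xK[OF \<open>j < n\<close>] \<open>0 < \<delta>\<close> by simp
  have "\<tau> * \<delta> * exp (- (real n * G)) \<le> cmod (x j - x i)"
  proof (cases "\<delta> \<le> cmod (x j - x i)")
    case True
    have "\<tau> * \<delta> * exp (- (real n * G)) \<le> 1 * \<delta> * 1"
      using \<open>0 < \<tau>\<close> \<open>\<tau> \<le> 1\<close> \<open>0 < \<delta>\<close> \<open>0 \<le> G\<close> by (intro mult_mono) auto
    then show ?thesis using True by simp
  next
    case False
    define Q where "Q = (\<Prod>l<j. [:- x l, 1:])"
    define h where "h z = (\<Prod>l\<in>{..<j} - {i}. z - x l)" for z
    define M where "M = (SUP z\<in>K. cmod (poly Q z))"
    have norm_Q: "cmod (poly Q z) = (\<Prod>l<j. cmod (z - x l))" for z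
      unfolding Q_def by (simp add: poly_prod prod_norm)
    have Q_split: "poly Q z = (z - x i) * h z" for z
      unfolding Q_def h_def using \<open>i < j\<close> by (simp add: poly_prod prod.remove[of "{..<j}" i] algebra_simps)
    have "Q \<noteq> 0" and "degree Q = j"
      unfolding Q_def by (simp_all add: degree_prod_eq_sum_degree)
    have "bdd_above ((\<lambda>z. cmod (poly Q z)) ` K)"
      by (intro bounded_imp_bdd_above compact_imp_bounded compact_continuous_image \<open>compact K\<close>
          continuous_intros)
    then have "cmod (poly Q z) \<le> M" if "z \<in> K" for z
      unfolding M_def using that by (intro cSUP_upper)
    then have BW: "cmod (poly Q z) \<le> M * exp (real n * g z)" for z
      using bernstein_walsh[OF green \<open>K \<noteq> {}\<close>, of Q n M] \<open>degree Q = j\<close> \<open>j < n\<close> by simp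
    have "0 < M"
    proof (rule ccontr)
      assume "\<not> 0 < M"
      then have "M * exp (real n * g z) \<le> 0" for z
        by (simp add: mult_nonpos_nonneg)
      then have "cmod (poly Q z) \<le> 0" for z
        using BW[of z] by (meson order_trans)
      then have "poly Q z = 0" for z by simp
      then show False using \<open>Q \<noteq> 0\<close> poly_all_0_iff_0 by blast
    qed
    have "\<tau> * M \<le> cmod (poly Q (x j))"
      using leja \<open>i < j\<close> \<open>j < n\<close> unfolding quasi_leja_def M_def norm_Q by auto
    also have "\<dots> = cmod (x j - x i) * cmod (h (x j))" by (simp add: Q_split norm_mult)
    finally have leja_h: "\<tau> * M \<le> cmod (x j - x i) * cmod (h (x j))" .
    have sphere_bound: "(2 * \<delta> - \<delta>) * cmod (h (x j)) \<le> M * exp (real n * G)"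
    proof (rule norm_le_of_sphere_bound_with_linear_factor[where h = h and c = "x j"])
      show "h holomorphic_on ball (x j) (2 * \<delta>)" unfolding h_def by (intro holomorphic_intros)
      show "continuous_on (cball (x j) (2 * \<delta>)) h" unfolding h_def by (intro continuous_intros)
      show "dist (x i) (x j) \<le> \<delta>" using False by (simp add: dist_norm norm_minus_commute)
      show "\<delta> < 2 * \<delta>" using \<open>0 < \<delta>\<close> by simp
    next
      fix z assume "dist (x j) z = 2 * \<delta>"
      then have "infdist z K \<le> 2 * \<delta>"
        using infdist_le[OF xK[OF \<open>j < n\<close>], of z] by (simp add: dist_commute)
      then have "M * exp (real n * g z) \<le> M * exp (real n * G)"
        using g_le_G \<open>0 < M\<close> by (simp add: mult_left_mono)
      then show "cmod ((z - x i) * h z) \<le> M * exp (real n * G)"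
        using BW[of z] by (simp add: Q_split)
    qed
    have "M * (\<tau> * \<delta>) \<le> cmod (x j - x i) * cmod (h (x j)) * \<delta>"
      using mult_right_mono[OF leja_h, of \<delta>] \<open>0 < \<delta>\<close> by (simp add: ac_simps)
    also have "\<dots> \<le> cmod (x j - x i) * (M * exp (real n * G))"
      using mult_left_mono[OF sphere_bound norm_ge_zero[of "x j - x i"]] by (simp add: ac_simps)
    finally have "\<tau> * \<delta> \<le> cmod (x j - x i) * exp (real n * G)"
      using \<open>0 < M\<close> by (simp add: ac_simps)
    then show ?thesis by (simp add: exp_minus field_simps)
  qed
  then show ?thesis unfolding G_def .
qed

theorem lemma1:
  fixes K :: "complex set" and g :: "complex \<Rightarrow> real" and \<tau> :: real
    and x :: "nat \<Rightarrow> complex" and n :: nat and G :: "real \<Rightarrow> real"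
  assumes "K \<subseteq> \<real>" and "regular_compact K" and "green_function_cont K g"
    and "\<And>\<delta>. G \<delta> = (SUP z\<in>{z. infdist z K \<le> 2 * \<delta>}. g z)"
    and "0 < \<tau>" and "\<tau> \<le> 1" and "quasi_leja \<tau> K x n"
  shows "\<forall>\<delta>>0. \<forall>i<n. \<forall>j<n. i \<noteq> j \<longrightarrow>
           cmod (x i - x j) \<ge> \<tau> * \<delta> * exp (- (real n * G \<delta>))"
proof (intro allI impI)
  fix \<delta> :: real and i j :: nat
  assume "0 < \<delta>" and "i < n" and "j < n" and "i \<noteq> j"
  have "compact K" using \<open>regular_compact K\<close> unfolding regular_compact_def by simp
  note gap = quasi_leja_gap[OF this assms(3,5,6,7) _ _ \<open>0 < \<delta>\<close>, folded assms(4)]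
  show "\<tau> * \<delta> * exp (- (real n * G \<delta>)) \<le> cmod (x i - x j)"
  proof (cases "i < j")
    case True
    then show ?thesis using gap[of i j] \<open>j < n\<close> by (simp add: norm_minus_commute)
  next
    case False
    then show ?thesis using gap[of j i] \<open>i < n\<close> \<open>i \<noteq> j\<close> by simp
  qed
qed

end
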